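(* Let $0\le b\le 1$ and $0\le\alpha<1$, and let $r_0=r_0(\alpha)$ be the real root in $(0,1)$ of the equation \[1-\alpha+(1+\alpha)r=2\big(1-\alpha+(2-\alpha)(1-b)r\big)(1-r)^3.\] Let $\mathcal{F}$ be the class of functions $f\in\mathcal{A}_b$, $f(z)=z+\sum_{n\ge2}a_nz^n$, with $|a_n|\le n$ for all $n\ge3$. Then: (i) every $f\in\mathcal{F}$ satisfies $\left|\frac{zf'(z)}{f(z)}-1\right|\le 1-\alpha$ for $|z|\le r_0$; (ii) $r_0(\alpha)$ is the radius of starlikeness of order $\alpha$ of $\mathcal{F}$; (iii) $r_0(1/2)$ is the radius of parabolic starlikeness of $\mathcal{F}$. All results are sharp: the function $f_0(z)=2z+2(1-b)z^2-\frac{z}{(1-z)^2}=z-2bz^2-\sum_{n\ge3}nz^n$ belongs to $\mathcal{F}$ and satisfies $\left|\frac{zf_0'(z)}{f_0(z)}-1\right|=1-\alpha$ and $\operatorname{Re}\frac{zf_0'(z)}{f_0(z)}=\alpha$ at $z=r_0$.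
   Context: $\mathbb{D}=\{z\in\mathbb{C}:|z|<1\}$. For $0\le b\le1$, $\mathcal{A}_b$ is the class of analytic functions $f$ on $\mathbb{D}$ of the form $f(z)=z+a_2z^2+a_3z^3+\cdots$ with $|a_2|=2b$. For a class $\mathcal{F}$ of analytic functions on $\mathbb{D}$ normalized by $f(0)=0$, $f'(0)=1$, and $0\le\alpha<1$, the radius of starlikeness of order $\alpha$ of $\mathcal{F}$ is the supremum of $r\in(0,1]$ such that every $f\in\mathcal{F}$ satisfies $f(z)\ne0$ for $0<|z|<r$ and $\operatorname{Re}\big(zf'(z)/f(z)\big)>\alpha$ for $|z|<r$ (the quotient being $1$ at $z=0$). The radius of parabolic starlikeness of $\mathcal{F}$ is the supremum of $r\in(0,1]$ such that every $f\in\mathcal{F}$ satisfies $\operatorname{Re}\big(zf'(z)/f(z)\big)>\left|zf'(z)/f(z)-1\right|$ for $|z|<r$. *)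

theory Defs
  imports "HOL-Analysis.Analysis"
begin

definition taylor_coeff :: "(complex \<Rightarrow> complex) \<Rightarrow> nat \<Rightarrow> complex" where
  "taylor_coeff f n = (deriv ^^ n) f 0 / of_nat (fact n)"

definition class_A :: "real \<Rightarrow> (complex \<Rightarrow> complex) set" where
  "class_A b = {f. f holomorphic_on ball 0 1 \<and> f 0 = 0 \<and> deriv f 0 = 1
                   \<and> norm (taylor_coeff f 2) = 2 * b}"

definition class_F :: "real \<Rightarrow> (complex \<Rightarrow> complex) set" where
  "class_F b = {f \<in> class_A b. \<forall>n\<ge>3. norm (taylor_coeff f n) \<le> real n}"

definition starq :: "(complex \<Rightarrow> complex) \<Rightarrow> complex \<Rightarrow> complex" where
  "starq f z = (if z = 0 then 1 else z * deriv f z / f z)"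

definition radius_starlike_order :: "(complex \<Rightarrow> complex) set \<Rightarrow> real \<Rightarrow> real" where
  "radius_starlike_order F \<alpha> = Sup {r. 0 < r \<and> r \<le> 1 \<and>
     (\<forall>f\<in>F. (\<forall>z. 0 < norm z \<and> norm z < r \<longrightarrow> f z \<noteq> 0) \<and>
             (\<forall>z. norm z < r \<longrightarrow> Re (starq f z) > \<alpha>))}"

definition radius_parabolic :: "(complex \<Rightarrow> complex) set \<Rightarrow> real" where
  "radius_parabolic F = Sup {r. 0 < r \<and> r \<le> 1 \<and>
     (\<forall>f\<in>F. \<forall>z. norm z < r \<longrightarrow> Re (starq f z) > norm (starq f z - 1))}"

definition root_r0 :: "real \<Rightarrow> real \<Rightarrow> real" where
  "root_r0 b \<alpha> = (THE r. 0 < r \<and> r < 1 \<and>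
     1 - \<alpha> + (1 + \<alpha>) * r = 2 * (1 - \<alpha> + (2 - \<alpha>) * (1 - b) * r) * (1 - r) ^ 3)"

definition f0 :: "real \<Rightarrow> complex \<Rightarrow> complex" where
  "f0 b z = 2 * z + 2 * complex_of_real (1 - b) * z ^ 2 - z / (1 - z) ^ 2"

end

theory Submission
  imports Defs "HOL-Complex_Analysis.Complex_Analysis"
begin

text \<open>For f in the class and |z| = r < 1, comparing coefficients with those of
  f0(z) = z - 2bz^2 - (sum over n \<ge> 3 of n z^n) gives |f(z)| \<ge> f0(r) and |zf'(z) - f(z)| \<le> f0(r) - r f0'(r),
  hence |zf'(z)/f(z) - 1| \<le> 1 - r f0'(r)/f0(r) as long as f0(r) > 0. Cleared of denominators,
  r f0'(r)/f0(r) = \<alpha> is the equation defining r0(\<alpha>), and the difference of its two sides is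
  strictly decreasing on [0,1]; so the bound is at most 1 - \<alpha> exactly for r \<le> r0, with equality
  for f0 at z = r0. Beyond r0 the function f0 either vanishes or has r f0'(r)/f0(r) < \<alpha>, which
  gives sharpness.\<close>

section \<open>The equation for \<open>r\<^sub>0\<close>\<close>

text \<open>For real r: f0(r) = r f0_den b r / (1-r)^3 and f0'(r) = f0_num b r / (1-r)^3.\<close>

definition f0_den :: "real \<Rightarrow> real \<Rightarrow> real" where
  "f0_den b r = (2 + 2 * (1 - b) * r) * (1 - r) ^ 3 - (1 - r)"

definition f0_num :: "real \<Rightarrow> real \<Rightarrow> real" where
  "f0_num b r = (2 + 4 * (1 - b) * r) * (1 - r) ^ 3 - (1 + r)"

definition r0_poly :: "real \<Rightarrow> real \<Rightarrow> real \<Rightarrow> real" where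
  "r0_poly b a r = 2 * (1 - a + (2 - a) * (1 - b) * r) * (1 - r) ^ 3 - (1 - a + (1 + a) * r)"

lemma r0_poly_eq: "r0_poly b a r = f0_num b r - a * f0_den b r"
  unfolding r0_poly_def f0_num_def f0_den_def by (simp add: algebra_simps)

lemma r0_poly_sign:
  assumes "0 < f0_den b r"
  shows "0 \<le> r0_poly b a r \<longleftrightarrow> a \<le> f0_num b r / f0_den b r"
    and "0 < r0_poly b a r \<longleftrightarrow> a < f0_num b r / f0_den b r"
    and "r0_poly b a r = 0 \<longleftrightarrow> f0_num b r / f0_den b r = a"
  using assms by (auto simp: r0_poly_eq pos_le_divide_eq pos_less_divide_eq field_simps)

lemma r0_poly_deriv_neg:
  fixes a b x :: real
  assumes "0 \<le> b" "b \<le> 1" "0 \<le> a" "a < 1" "0 \<le> x" "x \<le> 1"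
  shows "2 * (2 - a) * (1 - b) * (1 - x) ^ 3
           - 6 * (1 - a + (2 - a) * (1 - b) * x) * (1 - x) ^ 2 - (1 + a) < 0"
proof -
  define u where "u = 1 - x"
  define B where "B = (2 - a) * (1 - b)"
  have u: "0 \<le> u" "u \<le> 1" using assms by (auto simp: u_def)
  have B: "0 \<le> B" "B \<le> 2 - a" using assms by (auto simp: B_def mult_left_le)
  have "2 * B * u ^ 3 \<le> 2 * B * u ^ 2"
    using u B by (simp add: mult_left_mono power_decreasing)
  moreover have "0 \<le> B * x * u ^ 2" using B assms by simp
  moreover have "(2 * B - 6 * (1 - a)) * u ^ 2 \<le> max 0 (2 * B - 6 * (1 - a))"
  proof (cases "2 * B - 6 * (1 - a) \<le> 0")
    case True then show ?thesis by (simp add: mult_nonpos_nonneg)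
  next
    case False
    have "u ^ 2 \<le> 1" using u by (simp add: power_le_one)
    then show ?thesis using False by (simp add: mult_left_le)
  qed
  moreover have "max 0 (2 * B - 6 * (1 - a)) < 1 + a" using B assms by auto
  moreover have "2 * B * u ^ 3 - 6 * (1 - a + B * x) * u ^ 2
      = 2 * B * u ^ 3 + (2 * B - 6 * (1 - a)) * u ^ 2 - 2 * B * u ^ 2 - 6 * (B * x * u ^ 2)"
    by (simp add: algebra_simps)
  ultimately have "2 * B * u ^ 3 - 6 * (1 - a + B * x) * u ^ 2 - (1 + a) < 0"
    by linarith
  then show ?thesis by (simp add: u_def B_def algebra_simps)
qed

lemma r0_poly_strict_decreasing:
  assumes "0 \<le> b" "b \<le> 1" "0 \<le> a" "a < 1" "0 \<le> x" "x < y" "y \<le> 1"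
  shows "r0_poly b a y < r0_poly b a x"
proof (rule DERIV_neg_imp_decreasing[OF \<open>x < y\<close>])
  fix t assume t: "x \<le> t" "t \<le> y"
  let ?d = "2 * (2 - a) * (1 - b) * (1 - t) ^ 3
              - 6 * (1 - a + (2 - a) * (1 - b) * t) * (1 - t) ^ 2 - (1 + a)"
  have "(r0_poly b a has_real_derivative ?d) (at t)"
    unfolding r0_poly_def
    by (rule derivative_eq_intros refl | simp)+
       (simp add: algebra_simps power2_eq_square power3_eq_cube)
  moreover have "?d < 0" using r0_poly_deriv_neg[of b a t] assms t by auto
  ultimately show "\<exists>d. (r0_poly b a has_real_derivative d) (at t) \<and> d < 0" by blast
qed

lemma r0_poly_sign_root_r0:
  assumes "0 \<le> b" "b \<le> 1" "0 \<le> a" "a < 1"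
  shows "0 < root_r0 b a" "root_r0 b a < 1" "r0_poly b a (root_r0 b a) = 0"
    and "\<And>x. 0 \<le> x \<Longrightarrow> x < root_r0 b a \<Longrightarrow> 0 < r0_poly b a x"
    and "\<And>x. root_r0 b a < x \<Longrightarrow> x \<le> 1 \<Longrightarrow> r0_poly b a x < 0"
proof -
  have "continuous_on {0..1} (r0_poly b a)"
    unfolding r0_poly_def by (intro continuous_intros)
  moreover have "r0_poly b a 1 \<le> 0" "0 \<le> r0_poly b a 0" using assms by (auto simp: r0_poly_def)
  ultimately obtain r where r: "0 \<le> r" "r \<le> 1" "r0_poly b a r = 0"
    using IVT2' by (metis zero_le_one)
  have "r \<noteq> 0" "r \<noteq> 1" using r assms by (auto simp: r0_poly_def)
  with r have r_root: "0 < r \<and> r < 1 \<and>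
      1 - a + (1 + a) * r = 2 * (1 - a + (2 - a) * (1 - b) * r) * (1 - r) ^ 3"
    by (auto simp: r0_poly_def)
  from r_root have "root_r0 b a = r"
    unfolding root_r0_def
  proof (rule the_equality)
    fix s assume "0 < s \<and> s < 1 \<and>
      1 - a + (1 + a) * s = 2 * (1 - a + (2 - a) * (1 - b) * s) * (1 - s) ^ 3"
    then have "0 < s" "s < 1" "r0_poly b a s = 0" by (auto simp: r0_poly_def)
    then show "s = r"
      using r r0_poly_strict_decreasing[OF assms, of s r] r0_poly_strict_decreasing[OF assms, of r s]
      by (metis less_le linorder_neqE_linordered_idom)
  qed
  then show "0 < root_r0 b a" "root_r0 b a < 1" "r0_poly b a (root_r0 b a) = 0"
    using r r_root by auto
  show "0 < r0_poly b a x" if "0 \<le> x" "x < root_r0 b a" for x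
    using r0_poly_strict_decreasing[OF assms that(1), of r] that r \<open>root_r0 b a = r\<close> by simp
  show "r0_poly b a x < 0" if "root_r0 b a < x" "x \<le> 1" for x
    using r0_poly_strict_decreasing[OF assms r(1), of x] that r \<open>root_r0 b a = r\<close> by simp
qed

lemma f0_num_less_f0_den:
  assumes "0 \<le> b" "b \<le> 1" "0 < r" "r < 1"
  shows "f0_num b r < f0_den b r"
proof -
  have "(1 - b) * (1 - r) ^ 3 \<le> (1 - r) ^ 3" using assms by (simp add: mult_left_le_one_le)
  also have "\<dots> < 1" using assms by (simp add: power_less_one_iff)
  finally have "r * ((1 - b) * (1 - r) ^ 3) < r" using assms by simp
  moreover have "f0_num b r - f0_den b r = 2 * (r * ((1 - b) * (1 - r) ^ 3)) - 2 * r"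
    by (simp add: f0_num_def f0_den_def algebra_simps)
  ultimately show ?thesis by linarith
qed

lemma f0_den_pos:
  assumes "0 \<le> b" "b \<le> 1" "a < 1" "0 < r" "r < 1" "0 \<le> r0_poly b a r"
  shows "0 < f0_den b r"
proof (rule ccontr)
  assume "\<not> 0 < f0_den b r"
  then have "f0_den b r \<le> a * f0_den b r"
    using assms mult_right_mono_neg[of a 1 "f0_den b r"] by simp
  with assms f0_num_less_f0_den[of b r] show False by (simp add: r0_poly_eq)
qed

section \<open>Power series\<close>

lemma sums_of_nat_mult_power:
  fixes z :: "'a :: {real_normed_field, banach}"
  assumes "norm z < 1"
  shows "(\<lambda>n. of_nat n * z ^ n) sums (z / (1 - z) ^ 2)"
proof -
  have "(\<lambda>n. of_nat (Suc n) * z ^ n) sums (1 / (1 - z) ^ 2)"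
    using geometric_deriv_sums[OF assms] .
  from sums_mult[OF this, of z]
  have "(\<lambda>n. of_nat (Suc n) * z ^ Suc n) sums (z / (1 - z) ^ 2)" by (simp add: algebra_simps)
  then show ?thesis by (subst (asm) sums_Suc_iff) simp
qed

lemma sums_of_nat_mult_pred_mult_power:
  fixes z :: "'a :: {real_normed_field, banach}"
  assumes "norm z < 1"
  shows "(\<lambda>n. of_nat n * (of_nat n - 1) * z ^ n) sums (2 * z ^ 2 / (1 - z) ^ 3)"
proof -
  have "1 - z \<noteq> 0" using assms by auto
  then have deriv: "((\<lambda>w. 1 / (1 - w) ^ 2) has_field_derivative (2 / (1 - z) ^ 3)) (at z)"
    by (auto intro!: derivative_eq_intros simp: divide_simps)
       (simp add: algebra_simps power2_eq_square power3_eq_cube power4_eq_xxxx)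
  have "(\<lambda>n. diffs (\<lambda>n. of_nat (Suc n)) n * z ^ n) sums (2 / (1 - z) ^ 3)"
  proof (rule termdiffs_sums_strong[where K = 1])
    show "(\<lambda>n. of_nat (Suc n) * w ^ n) sums (1 / (1 - w) ^ 2)" if "norm w < 1" for w :: 'a
      using geometric_deriv_sums[OF that] .
  qed (use deriv assms in auto)
  from sums_mult[OF this, of "z ^ 2"]
  have "(\<lambda>n. of_nat (Suc (Suc n)) * (of_nat (Suc (Suc n)) - 1) * z ^ Suc (Suc n))
          sums (2 * z ^ 2 / (1 - z) ^ 3)"
    by (simp add: diffs_def algebra_simps power2_eq_square)
  then show ?thesis by (subst (asm) sums_Suc_iff, subst (asm) sums_Suc_iff) simp
qed

lemma taylor_coeff_sums:
  assumes "f holomorphic_on ball 0 R" "norm z < R"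
  shows "(\<lambda>n. taylor_coeff f n * z ^ n) sums f z"
  using holomorphic_power_series[OF assms(1), of z] assms(2) by (simp add: taylor_coeff_def)

lemma taylor_coeff_sums_deriv:
  assumes "f holomorphic_on ball 0 R" "norm z < R"
  shows "(\<lambda>n. of_nat n * taylor_coeff f n * z ^ n) sums (z * deriv f z)"
proof -
  have series: "(\<lambda>n. (deriv ^^ n) (deriv f) 0 / fact n * z ^ n) sums deriv f z"
    using holomorphic_power_series[OF holomorphic_deriv[OF assms(1) open_ball], of z] assms(2)
    by simp
  have term_eq: "of_nat (Suc n) * taylor_coeff f (Suc n) * z ^ Suc n
      = z * ((deriv ^^ n) (deriv f) 0 / fact n * z ^ n)" for n
  proof -
    have "(deriv ^^ Suc n) f 0 = (deriv ^^ n) (deriv f) 0"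
      by (metis funpow_Suc_right comp_apply)
    moreover have "(fact (Suc n) :: complex) = of_nat (Suc n) * fact n" by simp
    ultimately show ?thesis
      unfolding taylor_coeff_def by (simp add: field_simps del: of_nat_Suc fact_Suc funpow.simps)
  qed
  have "(\<lambda>n. of_nat (Suc n) * taylor_coeff f (Suc n) * z ^ Suc n) sums (z * deriv f z)"
    unfolding term_eq by (rule sums_mult[OF series])
  then show ?thesis by (subst (asm) sums_Suc_iff) simp
qed

lemma taylor_coeff_eqI:
  fixes g :: "complex \<Rightarrow> complex"
  assumes "0 < R" and sums: "\<And>z. norm z < R \<Longrightarrow> (\<lambda>n. c n * z ^ n) sums g z"
  shows "taylor_coeff g n = c n"
proof -
  have "g has_fps_expansion Abs_fps c"
    unfolding has_fps_expansion_def fps_conv_radius_def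
  proof
    have "summable (\<lambda>n. c n * of_real (R / 2) ^ n)"
      using sums[of "of_real (R / 2)"] \<open>0 < R\<close> by (auto intro: sums_summable)
    then have "ereal (R / 2) \<le> conv_radius c"
      using conv_radius_geI[of c "of_real (R / 2)"] \<open>0 < R\<close> by simp
    then show "0 < conv_radius (fps_nth (Abs_fps c))"
      using \<open>0 < R\<close> by (simp add: less_le_trans[rotated])
    have "\<forall>z\<in>ball 0 R. eval_fps (Abs_fps c) z = g z"
      using sums by (simp add: eval_fps_def sums_iff)
    then show "\<forall>\<^sub>F z in nhds 0. eval_fps (Abs_fps c) z = g z"
      unfolding eventually_nhds using \<open>0 < R\<close> by (intro exI[of _ "ball 0 R"]) auto
  qed
  from fps_nth_fps_expansion[OF this, of n] show ?thesis by (simp add: taylor_coeff_def)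
qed

section \<open>Coefficient estimates in the class\<close>

lemma class_F_taylor_coeff:
  assumes "f \<in> class_F b"
  shows "f holomorphic_on ball 0 1" "taylor_coeff f 0 = 0" "taylor_coeff f 1 = 1"
    and "norm (taylor_coeff f 2) = 2 * b" "\<And>n. 3 \<le> n \<Longrightarrow> norm (taylor_coeff f n) \<le> real n"
  using assms by (auto simp: class_F_def class_A_def taylor_coeff_def)

lemma class_F_norm_ge:
  assumes f: "f \<in> class_F b" and z: "norm z < 1"
  shows "norm z * f0_den b (norm z) / (1 - norm z) ^ 3 \<le> norm (f z)"
proof -
  define r where "r = norm z"
  have r: "0 \<le> r" "r < 1" using z by (auto simp: r_def)
  note F = class_F_taylor_coeff[OF f]
  have F1: "taylor_coeff f (Suc 0) = 1" using F(3) by simp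
  define e where "e n = taylor_coeff f n * z ^ n - (if n = 1 then z else 0)" for n
  define g where "g n = real n * r ^ n - (if n = 1 then r else 0)
                          - (if n = 2 then (2 - 2 * b) * r ^ 2 else 0)" for n
  have "e sums (f z - z)"
    unfolding e_def
    by (intro sums_diff taylor_coeff_sums[OF F(1) z]) (use sums_single[of 1 "\<lambda>_. z"] in simp)
  moreover have g_sums: "g sums (r / (1 - r) ^ 2 - r - (2 - 2 * b) * r ^ 2)"
    unfolding g_def using r
    by (intro sums_diff sums_of_nat_mult_power) (auto intro: sums_single[of _ "\<lambda>_. _", simplified])
  moreover have "norm (e n) \<le> g n" for n
  proof -
    consider "n = 0" | "n = 1" | "n = 2" | "3 \<le> n" by linarith
    then show ?thesis
    proof cases
      case 4
      then have "norm (e n) = norm (taylor_coeff f n) * r ^ n"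
        by (simp add: e_def norm_mult norm_power r_def)
      also have "\<dots> \<le> real n * r ^ n" using F(5)[OF 4] r by (intro mult_right_mono) auto
      finally show ?thesis using 4 by (simp add: g_def)
    qed (auto simp: e_def g_def F F1 norm_mult norm_power r_def algebra_simps)
  qed
  ultimately have "norm (f z - z) \<le> r / (1 - r) ^ 2 - r - (2 - 2 * b) * r ^ 2"
    by (metis norm_suminf_le sums_summable sums_unique)
  moreover have "r - (r / (1 - r) ^ 2 - r - (2 - 2 * b) * r ^ 2) = r * f0_den b r / (1 - r) ^ 3"
    using r by (simp add: f0_den_def field_simps) (simp add: algebra_simps power2_eq_square power3_eq_cube)
  moreover have "norm z - norm (f z - z) \<le> norm (f z)"
    using norm_triangle_ineq2[of z "z - f z"] by (simp add: norm_minus_commute)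
  ultimately show ?thesis by (simp add: r_def)
qed

lemma class_F_norm_zderiv_sub_le:
  assumes f: "f \<in> class_F b" and z: "norm z < 1"
  shows "norm (z * deriv f z - f z)
           \<le> norm z * (f0_den b (norm z) - f0_num b (norm z)) / (1 - norm z) ^ 3"
proof -
  define r where "r = norm z"
  have r: "0 \<le> r" "r < 1" using z by (auto simp: r_def)
  note F = class_F_taylor_coeff[OF f]
  define e where "e n = (of_nat n - 1) * taylor_coeff f n * z ^ n" for n
  define g where "g n = real n * (real n - 1) * r ^ n - (if n = 2 then (2 - 2 * b) * r ^ 2 else 0)" for n
  have "(\<lambda>n. of_nat n * taylor_coeff f n * z ^ n - taylor_coeff f n * z ^ n) sums (z * deriv f z - f z)"
    by (intro sums_diff taylor_coeff_sums[OF F(1) z] taylor_coeff_sums_deriv[OF F(1) z])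
  then have "e sums (z * deriv f z - f z)" unfolding e_def by (simp add: algebra_simps)
  moreover have "g sums (2 * r ^ 2 / (1 - r) ^ 3 - (2 - 2 * b) * r ^ 2)"
    unfolding g_def using r
    by (intro sums_diff sums_of_nat_mult_pred_mult_power) (auto intro: sums_single[of _ "\<lambda>_. _", simplified])
  moreover have "norm (e n) \<le> g n" for n
  proof -
    consider "n = 0" | "n = 1" | "n = 2" | "3 \<le> n" by linarith
    then show ?thesis
    proof cases
      case 4
      have "(of_nat n - 1 :: complex) = of_real (real n - 1)" by simp
      then have "norm (of_nat n - 1 :: complex) = real n - 1" using 4 by (simp del: of_real_diff)
      then have "norm (e n) = (real n - 1) * norm (taylor_coeff f n) * r ^ n"
        by (simp add: e_def norm_mult norm_power r_def)
      also have "\<dots> \<le> (real n - 1) * real n * r ^ n"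
        using F(5)[OF 4] r 4 by (intro mult_right_mono mult_left_mono) auto
      finally show ?thesis using 4 by (simp add: g_def algebra_simps)
    qed (auto simp: e_def g_def F norm_mult norm_power r_def algebra_simps)
  qed
  ultimately have "norm (z * deriv f z - f z) \<le> 2 * r ^ 2 / (1 - r) ^ 3 - (2 - 2 * b) * r ^ 2"
    by (metis norm_suminf_le sums_summable sums_unique)
  moreover have "2 * r ^ 2 / (1 - r) ^ 3 - (2 - 2 * b) * r ^ 2 = r * (f0_den b r - f0_num b r) / (1 - r) ^ 3"
    using r by (simp add: f0_den_def f0_num_def field_simps)
               (simp add: algebra_simps power2_eq_square power3_eq_cube)
  ultimately show ?thesis by (simp add: r_def)
qed

lemma class_F_starq_bound:
  assumes f: "f \<in> class_F b" and b: "0 \<le> b" "b \<le> 1"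
    and z: "z \<noteq> 0" "norm z < 1" and den: "0 < f0_den b (norm z)"
  shows "f z \<noteq> 0" "norm (starq f z - 1) \<le> 1 - f0_num b (norm z) / f0_den b (norm z)"
proof -
  define r where "r = norm z"
  have r: "0 < r" "r < 1" using z by (auto simp: r_def)
  have lower_pos: "0 < r * f0_den b r / (1 - r) ^ 3" using r den by (simp add: r_def)
  have lower: "r * f0_den b r / (1 - r) ^ 3 \<le> norm (f z)"
    using class_F_norm_ge[OF f z(2)] by (simp add: r_def)
  then show "f z \<noteq> 0" using lower_pos by auto
  then have "norm (starq f z - 1) = norm (z * deriv f z - f z) / norm (f z)"
    using z by (simp add: starq_def norm_divide field_simps)
  also have "\<dots> \<le> (r * (f0_den b r - f0_num b r) / (1 - r) ^ 3) / (r * f0_den b r / (1 - r) ^ 3)"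
  proof (rule frac_le)
    show "0 \<le> r * (f0_den b r - f0_num b r) / (1 - r) ^ 3"
      using f0_num_less_f0_den[OF b r] r by simp
    show "norm (z * deriv f z - f z) \<le> r * (f0_den b r - f0_num b r) / (1 - r) ^ 3"
      using class_F_norm_zderiv_sub_le[OF f z(2)] by (simp add: r_def)
  qed (use lower_pos lower in auto)
  also have "\<dots> = 1 - f0_num b r / f0_den b r" using r den by (simp add: field_simps r_def)
  finally show "norm (starq f z - 1) \<le> 1 - f0_num b (norm z) / f0_den b (norm z)"
    by (simp add: r_def)
qed

lemma class_F_starq_le_root_r0:
  assumes f: "f \<in> class_F b" and b: "0 \<le> b" "b \<le> 1" and a: "0 \<le> a" "a < 1"
    and z: "norm z \<le> root_r0 b a"
  shows "norm (starq f z - 1) \<le> 1 - a"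
proof (cases "z = 0")
  case True then show ?thesis using a by (simp add: starq_def)
next
  case False
  note R = r0_poly_sign_root_r0[OF b a]
  have z1: "norm z < 1" using z R(2) by linarith
  have "0 \<le> r0_poly b a (norm z)"
    using R(3) R(4)[of "norm z"] z by (cases "norm z = root_r0 b a") auto
  moreover have den: "0 < f0_den b (norm z)"
    using f0_den_pos[OF b a(2) _ z1 calculation] False by simp
  ultimately have "a \<le> f0_num b (norm z) / f0_den b (norm z)"
    using r0_poly_sign(1)[OF den, where a = a] by simp
  then show ?thesis using class_F_starq_bound(2)[OF f b False z1 den] by linarith
qed

lemma class_F_starq_less_root_r0:
  assumes f: "f \<in> class_F b" and b: "0 \<le> b" "b \<le> 1" and a: "0 \<le> a" "a < 1"
    and z: "norm z < root_r0 b a"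
  shows "z \<noteq> 0 \<Longrightarrow> f z \<noteq> 0" "norm (starq f z - 1) < 1 - a"
proof -
  note R = r0_poly_sign_root_r0[OF b a]
  have z1: "norm z < 1" using z R(2) by linarith
  have pos: "0 < r0_poly b a (norm z)" using R(4)[of "norm z"] z by simp
  have den: "0 < f0_den b (norm z)" if "z \<noteq> 0"
    using f0_den_pos[OF b a(2) _ z1 less_imp_le[OF pos]] that by simp
  show "f z \<noteq> 0" if "z \<noteq> 0"
    using class_F_starq_bound(1)[OF f b that z1 den[OF that]] .
  show "norm (starq f z - 1) < 1 - a"
  proof (cases "z = 0")
    case True then show ?thesis using a by (simp add: starq_def)
  next
    case False
    have "a < f0_num b (norm z) / f0_den b (norm z)"
      using r0_poly_sign(2)[OF den[OF False], where a = a] pos by simp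
    then show ?thesis using class_F_starq_bound(2)[OF f b False z1 den[OF False]] by linarith
  qed
qed

section \<open>The extremal function\<close>

lemma f0_sums:
  assumes "norm z < 1"
  shows "(\<lambda>n. ((if n = 1 then 2 else 0) + (if n = 2 then 2 * of_real (1 - b) else 0) - of_nat n)
            * z ^ n) sums f0 b z"
proof -
  have "(\<lambda>n. (if n = 1 then 2 * z ^ n else 0) + (if n = 2 then 2 * of_real (1 - b) * z ^ n else 0)
           - of_nat n * z ^ n) sums (2 * z + 2 * of_real (1 - b) * z ^ 2 - z / (1 - z) ^ 2)"
    using sums_single[of 1 "\<lambda>n. 2 * z ^ n"] sums_single[of 2 "\<lambda>n. 2 * of_real (1 - b) * z ^ n"]
    by (intro sums_diff sums_add sums_of_nat_mult_power assms) simp_all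
  moreover have "(\<lambda>n. (if n = 1 then 2 * z ^ n else 0) + (if n = 2 then 2 * of_real (1 - b) * z ^ n else 0)
           - of_nat n * z ^ n)
      = (\<lambda>n. ((if n = 1 then 2 else 0) + (if n = 2 then 2 * of_real (1 - b) else 0) - of_nat n) * z ^ n)"
    by (auto simp: algebra_simps)
  ultimately show ?thesis by (simp add: f0_def)
qed

lemma taylor_coeff_f0:
  "taylor_coeff (f0 b) n = (if n = 1 then 2 else 0) + (if n = 2 then 2 * of_real (1 - b) else 0) - of_nat n"
  by (rule taylor_coeff_eqI[OF zero_less_one f0_sums])

lemma f0_in_class_F:
  assumes "0 \<le> b" "b \<le> 1"
  shows "f0 b \<in> class_F b"
proof -
  have "f0 b holomorphic_on ball 0 1"
    unfolding f0_def by (intro holomorphic_intros) auto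
  moreover have "deriv (f0 b) 0 = 1"
    using taylor_coeff_f0[of b 1] by (simp add: taylor_coeff_def)
  moreover have "taylor_coeff (f0 b) 2 = of_real (- 2 * b)"
    by (simp add: taylor_coeff_f0)
  moreover have "norm (taylor_coeff (f0 b) n) \<le> real n" if "3 \<le> n" for n
    using that by (simp add: taylor_coeff_f0)
  ultimately show ?thesis using assms by (simp add: class_F_def class_A_def f0_def)
qed

lemma f0_has_field_derivative:
  assumes "z \<noteq> 1"
  shows "(f0 b has_field_derivative (2 + 4 * of_real (1 - b) * z - (1 + z) / (1 - z) ^ 3)) (at z)"
proof -
  have "1 - z \<noteq> 0" using assms by auto
  then have "((\<lambda>w. w / (1 - w) ^ 2) has_field_derivative ((1 + z) / (1 - z) ^ 3)) (at z)"
    by (auto intro!: derivative_eq_intros simp: divide_simps)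
       (simp add: algebra_simps power2_eq_square power3_eq_cube power4_eq_xxxx)
  moreover have "((\<lambda>w. 2 * w + 2 * of_real (1 - b) * w ^ 2) has_field_derivative
      (2 + 4 * of_real (1 - b) * z)) (at z)"
    by (auto intro!: derivative_eq_intros)
  ultimately show ?thesis unfolding f0_def using DERIV_diff by fastforce
qed

lemma f0_of_real:
  fixes r :: real assumes "r \<noteq> 1"
  shows "f0 b (of_real r) = of_real (r * f0_den b r / (1 - r) ^ 3)"
proof -
  have "f0 b (of_real r) = of_real (2 * r + 2 * (1 - b) * r ^ 2 - r / (1 - r) ^ 2)"
    by (simp add: f0_def)
  also have "2 * r + 2 * (1 - b) * r ^ 2 - r / (1 - r) ^ 2 = r * f0_den b r / (1 - r) ^ 3"
    using assms by (simp add: f0_den_def field_simps) (simp add: algebra_simps power2_eq_square power3_eq_cube)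
  finally show ?thesis .
qed

lemma deriv_f0_of_real:
  fixes r :: real assumes "r \<noteq> 1"
  shows "deriv (f0 b) (of_real r) = of_real (f0_num b r / (1 - r) ^ 3)"
proof -
  have "of_real r \<noteq> (1 :: complex)" using assms by (metis of_real_1 of_real_eq_iff)
  from DERIV_imp_deriv[OF f0_has_field_derivative[OF this]]
  have "deriv (f0 b) (of_real r) = of_real (2 + 4 * (1 - b) * r - (1 + r) / (1 - r) ^ 3)"
    by simp
  also have "2 + 4 * (1 - b) * r - (1 + r) / (1 - r) ^ 3 = f0_num b r / (1 - r) ^ 3"
    using assms by (simp add: f0_num_def field_simps)
  finally show ?thesis .
qed

lemma starq_f0_of_real:
  fixes r :: real assumes "0 < r" "r < 1"
  shows "starq (f0 b) (of_real r) = of_real (f0_num b r / f0_den b r)"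
proof -
  have "starq (f0 b) (of_real r) = of_real (r * (f0_num b r / (1 - r) ^ 3) / (r * f0_den b r / (1 - r) ^ 3))"
    using assms by (simp add: starq_def f0_of_real deriv_f0_of_real)
  also have "r * (f0_num b r / (1 - r) ^ 3) / (r * f0_den b r / (1 - r) ^ 3) = f0_num b r / f0_den b r"
    using assms by (cases "f0_den b r = 0") (simp_all add: field_simps)
  finally show ?thesis .
qed

lemma starq_f0_root_r0:
  assumes b: "0 \<le> b" "b \<le> 1" and a: "0 \<le> a" "a < 1"
  shows "starq (f0 b) (of_real (root_r0 b a)) = of_real a"
proof -
  note R = r0_poly_sign_root_r0[OF b a]
  have den: "0 < f0_den b (root_r0 b a)" using f0_den_pos[OF b a(2) R(1,2)] R(3) by simp
  show ?thesis
    using starq_f0_of_real[OF R(1,2), of b] r0_poly_sign(3)[OF den] R(3) by (simp del: of_real_divide)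
qed

text \<open>Past r0, either f0_den changes sign first (a zero of f0) or r0_poly does.\<close>

lemma f0_beyond_root_r0:
  assumes b: "0 \<le> b" "b \<le> 1" and a: "0 \<le> a" "a < 1"
    and r: "root_r0 b a < r" "r \<le> 1"
  obtains x where "0 < x" "x < r"
    "f0 b (of_real x) = 0 \<or> (\<exists>t < a. starq (f0 b) (of_real x) = of_real t)"
proof -
  note R = r0_poly_sign_root_r0[OF b a]
  define y where "y = (root_r0 b a + r) / 2"
  have y: "root_r0 b a < y" "y < r" "y < 1" using r by (auto simp: y_def)
  show ?thesis
  proof (cases "0 < f0_den b y")
    case True
    have "f0_num b y / f0_den b y < a"
      using r0_poly_sign(1)[OF True, where a = a] R(5)[of y] y by simp
    moreover have "starq (f0 b) (of_real y) = of_real (f0_num b y / f0_den b y)"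
      using starq_f0_of_real[of y b] y R(1) by simp
    ultimately show ?thesis using y R(1) by (intro that[of y]) (auto simp del: of_real_divide)
  next
    case False
    have "0 < f0_den b (root_r0 b a)" using f0_den_pos[OF b a(2) R(1,2)] R(3) by simp
    moreover have "continuous_on {root_r0 b a..y} (f0_den b)"
      unfolding f0_den_def by (intro continuous_intros)
    ultimately obtain x where x: "root_r0 b a \<le> x" "x \<le> y" "f0_den b x = 0"
      using IVT2'[of "f0_den b" y 0 "root_r0 b a"] False y by auto
    then have "x \<noteq> root_r0 b a" "x \<noteq> 1"
      using \<open>0 < f0_den b (root_r0 b a)\<close> y by auto
    then show ?thesis using that[of x] x y R(1) by (simp add: f0_of_real)
  qed
qed

section \<open>The radii\<close>

lemma radius_starlike_order_eqI:
  assumes "0 < r\<^sub>0" "r\<^sub>0 \<le> 1"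
    and nonzero: "\<And>f z. f \<in> F \<Longrightarrow> 0 < norm z \<Longrightarrow> norm z < r\<^sub>0 \<Longrightarrow> f z \<noteq> 0"
    and starlike: "\<And>f z. f \<in> F \<Longrightarrow> norm z < r\<^sub>0 \<Longrightarrow> \<alpha> < Re (starq f z)"
    and sharp: "\<And>r. r\<^sub>0 < r \<Longrightarrow> r \<le> 1 \<Longrightarrow>
       \<exists>f\<in>F. \<exists>z. norm z < r \<and> (0 < norm z \<and> f z = 0 \<or> Re (starq f z) \<le> \<alpha>)"
  shows "radius_starlike_order F \<alpha> = r\<^sub>0"
proof -
  let ?P = "\<lambda>r. 0 < r \<and> r \<le> 1 \<and> (\<forall>f\<in>F. (\<forall>z. 0 < norm z \<and> norm z < r \<longrightarrow> f z \<noteq> 0) \<and>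
                  (\<forall>z. norm z < r \<longrightarrow> \<alpha> < Re (starq f z)))"
  have "Sup (Collect ?P) = r\<^sub>0"
  proof (rule cSup_eq_maximum)
    show "r\<^sub>0 \<in> Collect ?P" using assms by auto
    show "r \<le> r\<^sub>0" if "r \<in> Collect ?P" for r
    proof (rule ccontr)
      assume "\<not> r \<le> r\<^sub>0"
      with that sharp[of r] show False by fastforce
    qed
  qed
  then show ?thesis by (simp add: radius_starlike_order_def)
qed

lemma radius_parabolic_eqI:
  assumes "0 < r\<^sub>0" "r\<^sub>0 \<le> 1"
    and parabolic: "\<And>f z. f \<in> F \<Longrightarrow> norm z < r\<^sub>0 \<Longrightarrow> norm (starq f z - 1) < Re (starq f z)"
    and sharp: "\<And>r. r\<^sub>0 < r \<Longrightarrow> r \<le> 1 \<Longrightarrow>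
       \<exists>f\<in>F. \<exists>z. norm z < r \<and> Re (starq f z) \<le> norm (starq f z - 1)"
  shows "radius_parabolic F = r\<^sub>0"
proof -
  let ?P = "\<lambda>r. 0 < r \<and> r \<le> 1 \<and>
              (\<forall>f\<in>F. \<forall>z. norm z < r \<longrightarrow> norm (starq f z - 1) < Re (starq f z))"
  have "Sup (Collect ?P) = r\<^sub>0"
  proof (rule cSup_eq_maximum)
    show "r\<^sub>0 \<in> Collect ?P" using assms by auto
    show "r \<le> r\<^sub>0" if "r \<in> Collect ?P" for r
    proof (rule ccontr)
      assume "\<not> r \<le> r\<^sub>0"
      with that sharp[of r] show False by fastforce
    qed
  qed
  then show ?thesis by (simp add: radius_parabolic_def)
qed

lemma Re_ge_one_minus_norm: "1 - norm (w - 1) \<le> Re w"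
  using abs_Re_le_cmod[of "w - 1"] by simp

lemma radius_starlike_order_class_F:
  assumes b: "0 \<le> b" "b \<le> 1" and a: "0 \<le> a" "a < 1"
  shows "radius_starlike_order (class_F b) a = root_r0 b a"
proof (rule radius_starlike_order_eqI)
  note R = r0_poly_sign_root_r0[OF b a]
  show "0 < root_r0 b a" "root_r0 b a \<le> 1" using R by auto
  show "f z \<noteq> 0" if "f \<in> class_F b" "0 < norm z" "norm z < root_r0 b a" for f z
    using class_F_starq_less_root_r0(1)[OF that(1) b a that(3)] that(2) by auto
  show "a < Re (starq f z)" if "f \<in> class_F b" "norm z < root_r0 b a" for f z
    using class_F_starq_less_root_r0(2)[OF that(1) b a that(2)] Re_ge_one_minus_norm[of "starq f z"] by linarith
  show "\<exists>f\<in>class_F b. \<exists>z. norm z < r \<and> (0 < norm z \<and> f z = 0 \<or> Re (starq f z) \<le> a)"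
    if r: "root_r0 b a < r" "r \<le> 1" for r
  proof -
    obtain x where "0 < x" "x < r"
      "f0 b (of_real x) = 0 \<or> (\<exists>t < a. starq (f0 b) (of_real x) = of_real t)"
      using f0_beyond_root_r0[OF b a r] .
    then show ?thesis using f0_in_class_F[OF b] by (intro bexI[of _ "f0 b"] exI[of _ "of_real x"]) auto
  qed
qed

lemma radius_parabolic_class_F:
  assumes b: "0 \<le> b" "b \<le> 1"
  shows "radius_parabolic (class_F b) = root_r0 b (1/2)"
proof (rule radius_parabolic_eqI)
  have a: "0 \<le> (1/2 :: real)" "(1/2 :: real) < 1" by auto
  note R = r0_poly_sign_root_r0[OF b a]
  show "0 < root_r0 b (1/2)" "root_r0 b (1/2) \<le> 1" using R by auto
  show "norm (starq f z - 1) < Re (starq f z)" if "f \<in> class_F b" "norm z < root_r0 b (1/2)" for f z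
    using class_F_starq_less_root_r0(2)[OF that(1) b a that(2)] Re_ge_one_minus_norm[of "starq f z"]
    by linarith
  show "\<exists>f\<in>class_F b. \<exists>z. norm z < r \<and> Re (starq f z) \<le> norm (starq f z - 1)"
    if r: "root_r0 b (1/2) < r" "r \<le> 1" for r
  proof -
    obtain x where x: "0 < x" "x < r"
      "f0 b (of_real x) = 0 \<or> (\<exists>t < 1/2. starq (f0 b) (of_real x) = of_real t)"
      using f0_beyond_root_r0[OF b a r] .
    have "Re (starq (f0 b) (of_real x)) \<le> norm (starq (f0 b) (of_real x) - 1)"
    proof (cases "f0 b (of_real x) = 0")
      case True
      with x show ?thesis by (simp add: starq_def)
    next
      case False
      with x obtain t where "t < 1/2" "starq (f0 b) (of_real x) = of_real t" by auto
      moreover have "norm (of_real t - 1 :: complex) = \<bar>t - 1\<bar>"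
        by (metis norm_of_real of_real_1 of_real_diff)
      ultimately show ?thesis by simp
    qed
    then show ?thesis using f0_in_class_F[OF b] x by (intro bexI[of _ "f0 b"] exI[of _ "of_real x"]) auto
  qed
qed

theorem theorem2p1:
  fixes b \<alpha> :: real
  assumes "0 \<le> b" "b \<le> 1" "0 \<le> \<alpha>" "\<alpha> < 1"
  shows "(\<forall>f\<in>class_F b. \<forall>z. norm z \<le> root_r0 b \<alpha> \<longrightarrow>
            norm (starq f z - 1) \<le> 1 - \<alpha>)
       \<and> radius_starlike_order (class_F b) \<alpha> = root_r0 b \<alpha>
       \<and> radius_parabolic (class_F b) = root_r0 b (1/2)
       \<and> f0 b \<in> class_F b
       \<and> norm (starq (f0 b) (complex_of_real (root_r0 b \<alpha>)) - 1) = 1 - \<alpha>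
       \<and> Re (starq (f0 b) (complex_of_real (root_r0 b \<alpha>))) = \<alpha>"
proof -
  have "norm (complex_of_real \<alpha> - 1) = 1 - \<alpha>"
    using assms(4) by (metis abs_of_neg diff_less_0_iff_less minus_diff_eq norm_of_real of_real_1 of_real_diff)
  then show ?thesis
    using class_F_starq_le_root_r0[OF _ assms] radius_starlike_order_class_F[OF assms]
      radius_parabolic_class_F[OF assms(1,2)] f0_in_class_F[OF assms(1,2)] starq_f0_root_r0[OF assms]
    by simp
qed

end
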